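(* In the setting described in the context, for any $s\in\{1,\dots,T\}$, any $k\in\{1,\dots,K\}$ and any $0<\beta<1$, $$\big(1-T^{\beta-1}\big)\|\mathbf{v}_k^*\|_2^2\le\|\mathbf{v}^*_{k\setminus s}\|_2^2\le\|\mathbf{v}_k^*\|_2^2$$ with probability at least $1-T^{-\beta}$.
   Context: Fixed inputs $\mathbf{x}_1,\dots,\mathbf{x}_N\in\mathbb{R}^d$. Networks $f_\theta(\mathbf{x})=\sum_{k=1}^K\mathbf{v}_k(\mathbf{w}_k^\top\mathbf{x}+b_k)_+$ with $\mathbf{w}_k\in\mathbb{S}^{d-1}$, $b_k\in\mathbb{R}$, $\mathbf{v}_k\in\mathbb{R}^T$, $K\ge N^2$. Training problem: $\min_\theta\sum_{i=1}^N\mathcal{L}(\mathbf{y}_i,f_\theta(\mathbf{x}_i))+\lambda\sum_{k=1}^K\|\mathbf{v}_k\|_2$, $\lambda>0$, with $\mathcal{L}(\mathbf{u},\mathbf{v})=\sum_t\mathcal{L}(u_t,v_t)$ separable across tasks and lower semicontinuous in its second argument. The task label vectors $\mathbf{y}_{\cdot,t}=(y_{1t},\dots,y_{Nt})$, $t=1,\dots,T$, are exchangeable random vectors. The optimal output weights $\mathbf{v}_k^*=(v^*_{k1},\dots,v^*_{kT})$ are selected by a measurable deterministic map of the labels that is permutation invariant: permuting the $T$ coordinates of all labels permutes the coordinates of all selected $\mathbf{v}_k^*$ in the same way. $\mathbf{v}^*_{k\setminus s}$ denotes $\mathbf{v}_k^*$ with its $s$-th entry removed. *)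

theory Defs
  imports "HOL-Analysis.Analysis" "HOL-Probability.Probability"
begin

definition lsc_fun :: "(real \<Rightarrow> real) \<Rightarrow> bool" where
  "lsc_fun f \<longleftrightarrow> (\<forall>x c. c < f x \<longrightarrow> (\<forall>\<^sub>F y in at x. c < f y))"

text \<open>Two-layer ReLU network with K = CARD('k) neurons, T = CARD('t) outputs.
  W $ k = w_k, b $ k = b_k, V $ k = v_k.\<close>
definition relu_net ::
  "real^'d^'k \<Rightarrow> real^'k \<Rightarrow> real^'t^'k \<Rightarrow> real^'d \<Rightarrow> real^'t" where
  "relu_net W b V x = (\<Sum>k\<in>UNIV. max 0 ((W $ k) \<bullet> x + b $ k) *\<^sub>R (V $ k))"

definition feasible_W :: "real^'d^'k \<Rightarrow> bool" where
  "feasible_W W \<longleftrightarrow> (\<forall>k. norm (W $ k) = 1)"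

text \<open>Training objective; labels Y $ i $ t = y_{it}, separable loss L.\<close>
definition train_obj ::
  "(real \<Rightarrow> real \<Rightarrow> real) \<Rightarrow> real \<Rightarrow> ('n \<Rightarrow> real^'d) \<Rightarrow> real^'t^'n
   \<Rightarrow> real^'d^'k \<Rightarrow> real^'k \<Rightarrow> real^'t^'k \<Rightarrow> real" where
  "train_obj L lam x Y W b V =
     (\<Sum>i\<in>UNIV. \<Sum>t\<in>UNIV. L (Y $ i $ t) (relu_net W b V (x i) $ t))
     + lam * (\<Sum>k\<in>UNIV. norm (V $ k))"

definition is_optimal ::
  "(real \<Rightarrow> real \<Rightarrow> real) \<Rightarrow> real \<Rightarrow> ('n \<Rightarrow> real^'d) \<Rightarrow> real^'t^'n
   \<Rightarrow> real^'d^'k \<Rightarrow> real^'k \<Rightarrow> real^'t^'k \<Rightarrow> bool" where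
  "is_optimal L lam x Y W b V \<longleftrightarrow> feasible_W W \<and>
     (\<forall>(W'::real^'d^'k) (b'::real^'k) (V'::real^'t^'k). feasible_W W' \<longrightarrow> train_obj L lam x Y W b V \<le> train_obj L lam x Y W' b' V')"

definition perm_tasks :: "('t \<Rightarrow> 't) \<Rightarrow> real^'t^'m \<Rightarrow> real^'t^'m" where
  "perm_tasks \<sigma> A = (\<chi> i t. A $ i $ (\<sigma> t))"

end

theory Submission
  imports Defs
begin

text \<open>Call \<open>(v $ t)\<^sup>2 / (norm v)\<^sup>2\<close> the energy share of task \<open>t\<close> in the output
  weight vector \<open>v\<close>. Equivariance of the selection map and exchangeability of the labels give
  all tasks the same expected share of \<open>v\<^sub>k\<^sup>*\<close>; as the shares sum to at most one, the share of
  task \<open>s\<close> has expectation at most \<open>1/T\<close>, and Markov's inequality bounds the probability that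
  it reaches \<open>T powr (\<beta> - 1)\<close> by \<open>T powr (-\<beta>)\<close>. Outside that event, deleting coordinate
  \<open>s\<close> loses less than the fraction \<open>T powr (\<beta> - 1)\<close> of the squared norm.\<close>

lemma power2_norm_vec_eq_sum: "(norm (v::real^'t::finite))\<^sup>2 = (\<Sum>t\<in>UNIV. (v $ t)\<^sup>2)"
  unfolding power2_norm_eq_inner inner_vec_def by (simp add: power2_eq_square)

lemma sum_power2_remove_eq:
  "(\<Sum>t\<in>UNIV - {s}. (v $ t)\<^sup>2) = (norm (v::real^'t::finite))\<^sup>2 - (v $ s)\<^sup>2"
  unfolding power2_norm_vec_eq_sum by (simp add: sum_diff1)

lemma sum_power2_remove_le: "(\<Sum>t\<in>UNIV - {s}. (v $ t)\<^sup>2) \<le> (norm (v::real^'t::finite))\<^sup>2"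
  unfolding sum_power2_remove_eq by simp

text \<open>For \<open>v = 0\<close> every share is \<open>0\<close> (division by zero), so the shares sum to at most one.\<close>
definition energy_share :: "real^'t::finite \<Rightarrow> 't \<Rightarrow> real" where
  "energy_share v t = (v $ t)\<^sup>2 / (norm v)\<^sup>2"

lemma energy_share_nonneg: "0 \<le> energy_share v t"
  unfolding energy_share_def by simp

lemma sum_energy_share_le_1: "(\<Sum>t\<in>UNIV. energy_share v t) \<le> 1"
proof (cases "v = 0")
  case False
  then show ?thesis
    unfolding energy_share_def sum_divide_distrib[symmetric] power2_norm_vec_eq_sum[symmetric]
    by simp
qed (simp add: energy_share_def)

lemma energy_share_le_1: "energy_share v t \<le> 1"
proof -
  have "energy_share v t \<le> (\<Sum>u\<in>UNIV. energy_share v u)"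
    by (rule member_le_sum) (simp_all add: energy_share_nonneg)
  then show ?thesis
    using sum_energy_share_le_1[of v] by linarith
qed

lemma energy_share_permute:
  assumes "\<sigma> permutes UNIV"
  shows "energy_share (\<chi> u. v $ \<sigma> u) t = energy_share v (\<sigma> t)"
proof -
  have "(norm (\<chi> u. v $ \<sigma> u))\<^sup>2 = (norm v)\<^sup>2"
    unfolding power2_norm_vec_eq_sum
    using sum.permute[OF assms, of "\<lambda>u. (v $ u)\<^sup>2"] by (simp add: comp_def)
  then show ?thesis
    unfolding energy_share_def by simp
qed

lemma borel_measurable_energy_share [measurable]:
  "(\<lambda>v. energy_share v t) \<in> borel_measurable borel"
  unfolding energy_share_def
  by (intro borel_measurable_divide; intro borel_measurable_continuous_onI continuous_intros)

lemma sum_power2_remove_ge_of_energy_share: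
  assumes "energy_share v s \<le> c"
  shows "(1 - c) * (norm v)\<^sup>2 \<le> (\<Sum>t\<in>UNIV - {s}. (v $ t)\<^sup>2)"
proof (cases "v = 0")
  case False
  then have "(v $ s)\<^sup>2 \<le> c * (norm v)\<^sup>2"
    using assms unfolding energy_share_def by (simp add: divide_le_eq)
  then show ?thesis
    unfolding sum_power2_remove_eq by (simp add: algebra_simps)
qed simp

lemma borel_measurable_vec_nth [measurable]: "(\<lambda>v. v $ i) \<in> borel_measurable borel"
  by (intro borel_measurable_continuous_onI continuous_intros)

lemma borel_measurable_perm_tasks: "perm_tasks \<sigma> \<in> borel_measurable borel"
  unfolding perm_tasks_def by (intro borel_measurable_continuous_onI continuous_intros)

lemma integral_eq_if_distr_eq:
  fixes g :: "'b \<Rightarrow> real"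
  assumes "X \<in> measurable M N" "X' \<in> measurable M N" "distr M N X = distr M N X'"
    and "g \<in> borel_measurable N"
  shows "(\<integral>\<omega>. g (X \<omega>) \<partial>M) = (\<integral>\<omega>. g (X' \<omega>) \<partial>M)"
  using integral_distr[OF assms(1,4)] integral_distr[OF assms(2,4)] assms(3) by simp

lemma integral_energy_share_exchangeable:
  fixes Y :: "'a \<Rightarrow> real^'t::finite^'n::finite"
    and Vsel :: "real^'t^'n \<Rightarrow> real^'t^'k::finite"
  assumes Y_meas: "Y \<in> borel_measurable M"
    and exch: "\<And>\<sigma>. \<sigma> permutes UNIV \<Longrightarrow>
                 distr M borel (\<lambda>\<omega>. perm_tasks \<sigma> (Y \<omega>)) = distr M borel Y"
    and Vsel_meas: "Vsel \<in> borel_measurable borel"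
    and equiv: "\<And>\<sigma> y. \<sigma> permutes UNIV \<Longrightarrow> Vsel (perm_tasks \<sigma> y) = perm_tasks \<sigma> (Vsel y)"
  shows "(\<integral>\<omega>. energy_share (Vsel (Y \<omega>) $ k) t \<partial>M)
       = (\<integral>\<omega>. energy_share (Vsel (Y \<omega>) $ k) s \<partial>M)"
proof -
  define \<sigma> where "\<sigma> = Transposition.transpose s t"
  have \<sigma>: "\<sigma> permutes UNIV"
    unfolding \<sigma>_def by (rule permutes_swap_id) auto
  define g where "g y = energy_share (Vsel y $ k) s" for y
  have g_meas: "g \<in> borel_measurable borel"
    unfolding g_def using Vsel_meas by measurable
  have "(\<integral>\<omega>. energy_share (Vsel (Y \<omega>) $ k) t \<partial>M)
      = (\<integral>\<omega>. g (perm_tasks \<sigma> (Y \<omega>)) \<partial>M)"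
    unfolding g_def equiv[OF \<sigma>] using energy_share_permute[OF \<sigma>]
    by (simp add: perm_tasks_def \<sigma>_def)
  also have "\<dots> = (\<integral>\<omega>. g (Y \<omega>) \<partial>M)"
    using integral_eq_if_distr_eq[OF measurable_compose[OF Y_meas borel_measurable_perm_tasks]
        Y_meas exch[OF \<sigma>] g_meas] .
  finally show ?thesis
    unfolding g_def .
qed

lemma (in prob_space) expectation_le_inverse_card_of_equal_expectations:
  fixes Z :: "'t::finite \<Rightarrow> 'a \<Rightarrow> real"
  assumes integrable: "\<And>t. integrable M (Z t)"
    and sum_le_1: "\<And>\<omega>. \<omega> \<in> space M \<Longrightarrow> (\<Sum>t\<in>UNIV. Z t \<omega>) \<le> 1"
    and equal: "\<And>t. expectation (Z t) = expectation (Z s)"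
  shows "expectation (Z s) \<le> 1 / CARD('t)"
proof -
  have "CARD('t) * expectation (Z s) = (\<Sum>t\<in>UNIV. expectation (Z t))"
    by (simp add: sum.cong[OF refl equal])
  also have "\<dots> = expectation (\<lambda>\<omega>. \<Sum>t\<in>UNIV. Z t \<omega>)"
    using integrable by (simp add: Bochner_Integration.integral_sum)
  also have "\<dots> \<le> expectation (\<lambda>_. 1)"
    using integrable sum_le_1 by (intro integral_mono) auto
  finally show ?thesis
    by (simp add: prob_space field_simps)
qed

lemma (in prob_space) prob_energy_share_ge_le:
  fixes V :: "'a \<Rightarrow> real^'t::finite" and c :: real
  assumes V_meas: "V \<in> borel_measurable M"
    and equal: "\<And>t. expectation (\<lambda>\<omega>. energy_share (V \<omega>) t)
                     = expectation (\<lambda>\<omega>. energy_share (V \<omega>) s)"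
    and c_pos: "0 < c"
  shows "prob {\<omega> \<in> space M. c \<le> energy_share (V \<omega>) s} \<le> 1 / (real CARD('t) * c)"
proof -
  have integrable: "integrable M (\<lambda>\<omega>. energy_share (V \<omega>) t)" for t
  proof (rule integrable_const_bound[where B=1])
    show "AE \<omega> in M. norm (energy_share (V \<omega>) t) \<le> 1"
      by (simp add: abs_of_nonneg energy_share_nonneg energy_share_le_1)
    show "(\<lambda>\<omega>. energy_share (V \<omega>) t) \<in> borel_measurable M"
      using V_meas by measurable
  qed
  have "prob {\<omega> \<in> space M. c \<le> energy_share (V \<omega>) s}
      \<le> expectation (\<lambda>\<omega>. energy_share (V \<omega>) s) / c"
    using integrable c_pos energy_share_nonneg
    by (intro integral_Markov_inequality_measure[where A="space M"]) auto
  also have "\<dots> \<le> (1 / CARD('t)) / c"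
    using c_pos integrable sum_energy_share_le_1 equal
    by (intro divide_right_mono expectation_le_inverse_card_of_equal_expectations) auto
  finally show ?thesis
    by simp
qed

theorem lemma2:
  fixes M :: "'a measure"
    and x :: "'n::finite \<Rightarrow> real^'d::finite"
    and L :: "real \<Rightarrow> real \<Rightarrow> real"
    and lam :: real
    and Y :: "'a \<Rightarrow> real^'t::finite^'n"
    and Wsel :: "real^'t^'n \<Rightarrow> real^'d^'k::finite"
    and bsel :: "real^'t^'n \<Rightarrow> real^'k"
    and Vsel :: "real^'t^'n \<Rightarrow> real^'t^'k"
    and s :: 't and k :: 'k and \<beta> :: real
  assumes K_ge: "CARD('k) \<ge> CARD('n)^2"
    and lam_pos: "lam > 0"
    and L_lsc: "\<And>u. lsc_fun (L u)"
    and P: "prob_space M"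
    and Y_meas: "Y \<in> borel_measurable M"
    and exch: "\<And>\<sigma>. \<sigma> permutes (UNIV :: 't set) \<Longrightarrow>
                 distr M borel (\<lambda>\<omega>. perm_tasks \<sigma> (Y \<omega>)) = distr M borel Y"
    and Wsel_meas: "Wsel \<in> borel_measurable borel"
    and bsel_meas: "bsel \<in> borel_measurable borel"
    and Vsel_meas: "Vsel \<in> borel_measurable borel"
    and opt: "\<And>\<omega>. \<omega> \<in> space M \<Longrightarrow>
                 is_optimal L lam x (Y \<omega>) (Wsel (Y \<omega>)) (bsel (Y \<omega>)) (Vsel (Y \<omega>))"
    and equiv: "\<And>\<sigma> y. \<sigma> permutes (UNIV :: 't set) \<Longrightarrow>
                 Vsel (perm_tasks \<sigma> y) = perm_tasks \<sigma> (Vsel y)"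
    and beta: "0 < \<beta>" "\<beta> < 1"
  shows "measure M {\<omega> \<in> space M.
            (1 - real CARD('t) powr (\<beta> - 1)) * (norm (Vsel (Y \<omega>) $ k))\<^sup>2
              \<le> (\<Sum>t\<in>UNIV - {s}. (Vsel (Y \<omega>) $ k $ t)\<^sup>2)
          \<and> (\<Sum>t\<in>UNIV - {s}. (Vsel (Y \<omega>) $ k $ t)\<^sup>2) \<le> (norm (Vsel (Y \<omega>) $ k))\<^sup>2}
         \<ge> 1 - real CARD('t) powr (- \<beta>)"
proof -
  interpret prob_space M by (rule P)
  define c where "c = real CARD('t) powr (\<beta> - 1)"
  define V where "V \<omega> = Vsel (Y \<omega>) $ k" for \<omega>
  define bad where "bad = {\<omega> \<in> space M. c \<le> energy_share (V \<omega>) s}"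
  have V_meas [measurable]: "V \<in> borel_measurable M"
    unfolding V_def using Y_meas Vsel_meas by measurable
  have equal: "expectation (\<lambda>\<omega>. energy_share (V \<omega>) t)
                = expectation (\<lambda>\<omega>. energy_share (V \<omega>) s)" for t
    unfolding V_def using Y_meas exch Vsel_meas equiv by (rule integral_energy_share_exchangeable)
  have "prob bad \<le> 1 / (CARD('t) * c)"
    unfolding bad_def by (rule prob_energy_share_ge_le[OF V_meas equal]) (simp add: c_def)
  also have "1 / (CARD('t) * c) = real CARD('t) powr (- \<beta>)"
    unfolding c_def by (simp add: powr_diff powr_minus_divide)
  finally have "1 - real CARD('t) powr (- \<beta>) \<le> prob (space M - bad)"
    by (subst prob_compl) (simp_all add: bad_def, measurable)
  also have "\<dots> \<le> measure M {\<omega> \<in> space M.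
      (1 - c) * (norm (V \<omega>))\<^sup>2 \<le> (\<Sum>t\<in>UNIV - {s}. (V \<omega> $ t)\<^sup>2)
      \<and> (\<Sum>t\<in>UNIV - {s}. (V \<omega> $ t)\<^sup>2) \<le> (norm (V \<omega>))\<^sup>2}"
    by (intro finite_measure_mono)
      (auto simp: bad_def not_le sum_power2_remove_le
        intro: sum_power2_remove_ge_of_energy_share less_imp_le)
  finally show ?thesis
    unfolding V_def c_def .
qed

end
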